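(* If $G$ is a connected locally Dirac graph of order $n \ge 8$, then the minimum degree satisfies $\delta(G) \ge 5$.
   Context: A graph $G$ is locally Dirac if for every vertex $v \in V(G)$ and every $u \in N(v)$, $\deg_{\langle N(v)\rangle}(u) \ge \deg_G(v)/2$, where $N(v)$ is the open neighbourhood of $v$ and $\langle N(v)\rangle$ the subgraph induced by it. *)

theory Defs
  imports Main
begin

definition simple_graph :: "'a set \<Rightarrow> ('a \<Rightarrow> 'a \<Rightarrow> bool) \<Rightarrow> bool" where
  "simple_graph V E \<longleftrightarrow> finite V \<and> (\<forall>u v. E u v \<longrightarrow> u \<in> V \<and> v \<in> V)
     \<and> (\<forall>u v. E u v \<longrightarrow> E v u) \<and> (\<forall>v. \<not> E v v)"

definition nbhd :: "'a set \<Rightarrow> ('a \<Rightarrow> 'a \<Rightarrow> bool) \<Rightarrow> 'a \<Rightarrow> 'a set" where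
  "nbhd V E v = {u \<in> V. E v u}"

definition degree :: "'a set \<Rightarrow> ('a \<Rightarrow> 'a \<Rightarrow> bool) \<Rightarrow> 'a \<Rightarrow> nat" where
  "degree V E v = card (nbhd V E v)"

definition induced_degree :: "'a set \<Rightarrow> ('a \<Rightarrow> 'a \<Rightarrow> bool) \<Rightarrow> 'a \<Rightarrow> nat" where
  "induced_degree S E u = card {w \<in> S. E u w}"

definition connected_graph :: "'a set \<Rightarrow> ('a \<Rightarrow> 'a \<Rightarrow> bool) \<Rightarrow> bool" where
  "connected_graph V E \<longleftrightarrow> (\<forall>u\<in>V. \<forall>v\<in>V. (\<lambda>x y. E x y)\<^sup>*\<^sup>* u v)"

definition locally_dirac :: "'a set \<Rightarrow> ('a \<Rightarrow> 'a \<Rightarrow> bool) \<Rightarrow> bool" where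
  "locally_dirac V E \<longleftrightarrow> (\<forall>v\<in>V. \<forall>u\<in>nbhd V E v.
      2 * induced_degree (nbhd V E v) E u \<ge> degree V E v)"

definition min_degree :: "'a set \<Rightarrow> ('a \<Rightarrow> 'a \<Rightarrow> bool) \<Rightarrow> nat" where
  "min_degree V E = Min (degree V E ` V)"

end

theory Submission
  imports Defs
begin

text \<open>Applied at a vertex a to a neighbour p, the locally Dirac condition says that p is
  adjacent to more than half of the other neighbours of a. If a vertex v has degree at most 4,
  this leaves every neighbour of v at most two neighbours outside the closed neighbourhood
  of v, and it forces every vertex at distance two from v to have at least three neighbours
  in N(v); double counting then gives at most two vertices at distance two. A further
  application of the same condition shows that no vertex is at distance three, so by
  connectedness G has at most 1 + 4 + 2 = 7 vertices.\<close>

lemma min_degree_attained: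
  assumes "simple_graph V E" and "V \<noteq> {}"
  obtains v where "v \<in> V" and "degree V E v = min_degree V E"
proof -
  have "min_degree V E \<in> degree V E ` V"
    unfolding min_degree_def using assms by (intro Min_in) (auto simp: simple_graph_def)
  then show thesis using that by auto
qed

lemma connected_graph_subset_if_closed:
  assumes "connected_graph V E" and "v \<in> V" and "v \<in> S"
    and closed: "\<And>s t. s \<in> S \<Longrightarrow> E s t \<Longrightarrow> t \<in> S"
  shows "V \<subseteq> S"
proof
  fix u assume "u \<in> V"
  with assms(1,2) have "E\<^sup>*\<^sup>* v u" unfolding connected_graph_def by blast
  then show "u \<in> S"
    by (induction rule: rtranclp_induct) (use \<open>v \<in> S\<close> closed in auto)
qed

locale locally_dirac_graph =
  fixes V :: "'a set" and E :: "'a \<Rightarrow> 'a \<Rightarrow> bool"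
  assumes simple: "simple_graph V E"
    and dirac: "locally_dirac V E"
begin

abbreviation N :: "'a \<Rightarrow> 'a set" where
  "N \<equiv> nbhd V E"

lemma finite_nbhd: "finite (N v)"
  using simple by (auto simp: simple_graph_def nbhd_def)

lemma in_nbhd_iff_edge: "u \<in> N v \<longleftrightarrow> E v u"
  using simple by (auto simp: simple_graph_def nbhd_def)

lemma nbhd_sym: "u \<in> N v \<longleftrightarrow> v \<in> N u"
  using simple by (auto simp: simple_graph_def nbhd_def)

lemma not_in_own_nbhd: "v \<notin> N v"
  using simple by (auto simp: simple_graph_def nbhd_def)

lemma card_nbhd_le_common:
  assumes "p \<in> N a"
  shows "card (N a) \<le> 2 * card (N a \<inter> N p)"
proof -
  have "a \<in> V" using assms nbhd_sym by (auto simp: nbhd_def)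
  moreover have "{w \<in> N a. E p w} = N a \<inter> N p" by (auto simp: nbhd_def)
  ultimately show ?thesis
    using dirac assms unfolding locally_dirac_def induced_degree_def degree_def by force
qed

lemma card_nbhd_split:
  assumes "p \<in> N a"
  shows "card (N a) = Suc (card (N a \<inter> N p) + card (N a - N p - {p}))"
proof -
  have "N a = insert p ((N a \<inter> N p) \<union> (N a - N p - {p}))" using assms by auto
  moreover have "p \<notin> (N a \<inter> N p) \<union> (N a - N p - {p})" using not_in_own_nbhd by auto
  ultimately have "card (N a) = Suc (card ((N a \<inter> N p) \<union> (N a - N p - {p})))"
    using finite_nbhd by (metis card_insert_disjoint finite_Diff finite_Int finite_Un)
  also have "card ((N a \<inter> N p) \<union> (N a - N p - {p})) = card (N a \<inter> N p) + card (N a - N p - {p})"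
    using finite_nbhd by (intro card_Un_disjoint) auto
  finally show ?thesis .
qed

lemma card_non_common_less_common:
  assumes "p \<in> N a"
  shows "card (N a - N p - {p}) < card (N a \<inter> N p)"
  using card_nbhd_le_common[OF assms] card_nbhd_split[OF assms] by linarith

text \<open>The Dirac condition at a is used twice, once for p and once for q; q can only
  see p's common neighbours with a and the non-neighbours of p other than itself.\<close>

lemma two_le_card_common_nbhd:
  assumes p: "p \<in> N a" and q: "q \<in> N a" and "q \<noteq> p" and "q \<notin> N p"
  shows "2 \<le> card (N a \<inter> N p \<inter> N q)"
proof -
  let ?R = "N a - N p - {p}"
  have "q \<in> ?R" using assms by auto
  have "N a \<inter> N q \<subseteq> (N a \<inter> N p \<inter> N q) \<union> (?R - {q})"
    using assms not_in_own_nbhd nbhd_sym by auto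
  then have "card (N a \<inter> N q) \<le> card ((N a \<inter> N p \<inter> N q) \<union> (?R - {q}))"
    using finite_nbhd by (intro card_mono) auto
  also have "\<dots> \<le> card (N a \<inter> N p \<inter> N q) + card (?R - {q})"
    by (rule card_Un_le)
  also have "card (?R - {q}) = card ?R - 1"
    using \<open>q \<in> ?R\<close> by simp
  finally have "card (N a \<inter> N q) \<le> card (N a \<inter> N p \<inter> N q) + (card ?R - 1)" .
  moreover have "card ?R \<ge> 1"
    using \<open>q \<in> ?R\<close> finite_nbhd by (auto simp: Suc_le_eq card_gt_0_iff)
  ultimately show ?thesis
    using card_nbhd_le_common[OF q] card_nbhd_split[OF p] card_non_common_less_common[OF p]
    by linarith
qed

definition sphere2 :: "'a \<Rightarrow> 'a set" where
  "sphere2 v = (\<Union>a\<in>N v. N a) - N v - {v}"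

definition ball2 :: "'a \<Rightarrow> 'a set" where
  "ball2 v = insert v (N v \<union> sphere2 v)"

lemma finite_sphere2: "finite (sphere2 v)"
  unfolding sphere2_def using finite_nbhd by auto

lemma nbhd_inter_sphere2:
  assumes "a \<in> N v"
  shows "N a \<inter> sphere2 v = N a - N v - {v}"
  using assms by (auto simp: sphere2_def)

lemma card_nbhd_inter_sphere2_le:
  assumes "a \<in> N v"
  shows "card (N a \<inter> sphere2 v) + 2 \<le> card (N v)"
proof -
  have "v \<in> N a" using assms nbhd_sym by blast
  have "card (N v) > 0" using assms finite_nbhd card_gt_0_iff by blast
  have "N a \<inter> N v \<subseteq> N v - {a}" using not_in_own_nbhd by auto
  then have "card (N a \<inter> N v) \<le> card (N v) - 1"
    using assms finite_nbhd by (metis card_Diff_singleton card_mono finite_Diff)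
  then show ?thesis
    unfolding nbhd_inter_sphere2[OF assms]
    using card_non_common_less_common[OF \<open>v \<in> N a\<close>] \<open>card (N v) > 0\<close> by linarith
qed

lemma three_le_card_nbhd_inter_nbhd:
  assumes "x \<in> sphere2 v"
  shows "3 \<le> card (N x \<inter> N v)"
proof -
  obtain a where a: "a \<in> N v" and "x \<in> N a" and "x \<notin> N v" and "x \<noteq> v"
    using assms by (auto simp: sphere2_def)
  have "v \<in> N a" using a nbhd_sym by blast
  have common: "2 \<le> card (N a \<inter> N v \<inter> N x)"
    using two_le_card_common_nbhd[OF \<open>v \<in> N a\<close> \<open>x \<in> N a\<close> \<open>x \<noteq> v\<close> \<open>x \<notin> N v\<close>] .
  have "insert a (N a \<inter> N v \<inter> N x) \<subseteq> N x \<inter> N v"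
    using a \<open>x \<in> N a\<close> nbhd_sym by auto
  moreover have "a \<notin> N a \<inter> N v \<inter> N x" using not_in_own_nbhd by auto
  moreover have "card (insert a (N a \<inter> N v \<inter> N x)) \<le> card (N x \<inter> N v)"
    using calculation(1) finite_nbhd by (intro card_mono) auto
  ultimately show ?thesis
    using common finite_nbhd by simp
qed

lemma three_card_sphere2_le:
  "3 * card (sphere2 v) \<le> (\<Sum>a\<in>N v. card (N a \<inter> sphere2 v))"
proof -
  have "3 * card (sphere2 v) = (\<Sum>x\<in>sphere2 v. 3)" by simp
  also have "\<dots> \<le> (\<Sum>x\<in>sphere2 v. card {a \<in> N v. x \<in> N a})"
  proof (rule sum_mono)
    fix x assume "x \<in> sphere2 v"
    moreover have "{a \<in> N v. x \<in> N a} = N x \<inter> N v" using nbhd_sym by blast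
    ultimately show "3 \<le> card {a \<in> N v. x \<in> N a}"
      using three_le_card_nbhd_inter_nbhd by simp
  qed
  also have "\<dots> = (\<Sum>a\<in>N v. card {x \<in> sphere2 v. x \<in> N a})"
    by (rule sum_multicount_gen[symmetric]) (auto simp: finite_nbhd finite_sphere2)
  finally show ?thesis by (simp add: Int_def conj_commute)
qed

text \<open>A vertex t at distance three, adjacent to s at distance two, would have two common
  neighbours with s in N(a) for a neighbour a of both s and v; together with s these give
  three vertices in N(a) at distance two.\<close>

lemma ball2_closed:
  assumes small: "\<And>a. a \<in> N v \<Longrightarrow> card (N a \<inter> sphere2 v) \<le> 2"
    and "s \<in> ball2 v" and "t \<in> N s"
  shows "t \<in> ball2 v"
proof (rule ccontr)
  assume t: "t \<notin> ball2 v"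
  then have "s \<in> sphere2 v" using assms(2,3) nbhd_sym by (auto simp: ball2_def sphere2_def)
  then obtain a where a: "a \<in> N v" and "s \<in> N a" by (auto simp: sphere2_def)
  have "t \<notin> N a" using t a by (auto simp: ball2_def sphere2_def)
  have "t \<noteq> a" using a t by (auto simp: ball2_def)
  have "a \<in> N s" using \<open>s \<in> N a\<close> nbhd_sym by blast
  have common: "2 \<le> card (N s \<inter> N a \<inter> N t)"
    using two_le_card_common_nbhd[OF \<open>a \<in> N s\<close> \<open>t \<in> N s\<close> \<open>t \<noteq> a\<close> \<open>t \<notin> N a\<close>] .
  have "N s \<inter> N a \<inter> N t \<subseteq> N a \<inter> sphere2 v - {s}"
  proof
    fix w assume w: "w \<in> N s \<inter> N a \<inter> N t"
    have "w \<notin> N v" using w t nbhd_sym by (auto simp: ball2_def sphere2_def)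
    moreover have "w \<noteq> v" using w t nbhd_sym by (auto simp: ball2_def)
    ultimately show "w \<in> N a \<inter> sphere2 v - {s}"
      using w a not_in_own_nbhd by (auto simp: sphere2_def)
  qed
  then have "2 \<le> card (N a \<inter> sphere2 v - {s})"
    using common finite_sphere2 by (meson card_mono finite_Diff finite_Int le_trans)
  moreover have "s \<in> N a \<inter> sphere2 v" using \<open>s \<in> N a\<close> \<open>s \<in> sphere2 v\<close> by blast
  ultimately show False
    using small[OF a] finite_sphere2 by (simp add: card_Diff_singleton)
qed

lemma card_ball2_le: "card (ball2 v) \<le> Suc (card (N v) + card (sphere2 v))"
proof -
  have "card (ball2 v) \<le> Suc (card (N v \<union> sphere2 v))"
    unfolding ball2_def using finite_nbhd finite_sphere2 by (simp add: card_insert_if)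
  then show ?thesis using card_Un_le[of "N v" "sphere2 v"] by linarith
qed

end

theorem mainTheorem6:
  fixes V :: "'a set" and E :: "'a \<Rightarrow> 'a \<Rightarrow> bool"
  assumes "simple_graph V E"
    and "connected_graph V E"
    and "locally_dirac V E"
    and "card V \<ge> 8"
  shows "min_degree V E \<ge> 5"
proof (rule ccontr)
  interpret locally_dirac_graph V E using assms(1,3) by unfold_locales
  assume "\<not> 5 \<le> min_degree V E"
  have "V \<noteq> {}" using assms(4) by auto
  then obtain v where v: "v \<in> V" and "degree V E v = min_degree V E"
    using min_degree_attained[OF assms(1)] by blast
  with \<open>\<not> 5 \<le> min_degree V E\<close> have "card (N v) \<le> 4" by (simp add: degree_def)
  then have small: "card (N a \<inter> sphere2 v) \<le> 2" if "a \<in> N v" for a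
    using card_nbhd_inter_sphere2_le[OF that] by linarith
  have "(\<Sum>a\<in>N v. card (N a \<inter> sphere2 v)) \<le> (\<Sum>a\<in>N v. 2)"
    by (rule sum_mono) (rule small)
  then have "3 * card (sphere2 v) \<le> 2 * card (N v)"
    using three_card_sphere2_le[of v] by simp
  then have "card (sphere2 v) \<le> 2" using \<open>card (N v) \<le> 4\<close> by linarith
  have "V \<subseteq> ball2 v"
  proof (rule connected_graph_subset_if_closed[OF assms(2) v])
    show "t \<in> ball2 v" if "s \<in> ball2 v" and "E s t" for s t
      using ball2_closed[OF small that(1)] that(2) by (simp add: in_nbhd_iff_edge)
  qed (simp add: ball2_def)
  then have "card V \<le> card (ball2 v)"
    using finite_nbhd finite_sphere2 by (intro card_mono) (simp_all add: ball2_def)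
  then show False
    using card_ball2_le[of v] \<open>card (N v) \<le> 4\<close> \<open>card (sphere2 v) \<le> 2\<close> assms(4) by linarith
qed

end
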